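(* Let $G$ be a cycle on $n_2\geq 3$ vertices. Then the graph $G^{\dagger}$ (for any choice of pairing in its construction) is neutral.
   Context: All graphs are finite and simple. A leaf is a vertex of degree one. The leaf-connecting operation on a graph $G$ produces $G^{\dagger}$ as follows: (1) for each vertex $v$ of $G$, attach $d_v$ new pendant vertices (leaves) to $v$; (2) repeatedly join a pair of leaves by an edge until no leaf is left (so the new pendant vertices are paired up by a perfect matching). For a graph $G=(V,E)$ with $m=|E|\geq1$ and degrees $d_u$, the assortativity coefficient is $$r(G)=\frac{m^{-1}\sum_{e_{uv}\in E} d_{u}d_{v}-\Big[m^{-1}\sum_{e_{uv}\in E} \tfrac{1}{2}(d_{u}+d_{v})\Big]^{2}}{m^{-1}\sum_{e_{uv}\in E} \tfrac{1}{2}(d^{2}_{u}+d^{2}_{v})-\Big[m^{-1}\sum_{e_{uv}\in E} \tfrac{1}{2}(d_{u}+d_{v})\Big]^{2}},$$ sums over edges counting each edge once, defined whenever the denominator is nonzero; $G$ is neutral if $r(G)$ is defined and equals $0$. *)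

theory Defs
  imports Complex_Main
begin

definition simple_graph :: "'a set \<Rightarrow> 'a set set \<Rightarrow> bool" where
  "simple_graph V E \<longleftrightarrow> finite V \<and> (\<forall>e\<in>E. e \<subseteq> V \<and> card e = 2)"

definition degree :: "'a set set \<Rightarrow> 'a \<Rightarrow> nat" where
  "degree E v = card {e \<in> E. v \<in> e}"

definition is_cycle :: "'a set \<Rightarrow> 'a set set \<Rightarrow> nat \<Rightarrow> bool" where
  "is_cycle V E n \<longleftrightarrow> simple_graph V E \<and> card V = n \<and>
     (\<exists>f. bij_betw f {0..<n} V \<and> E = {{f i, f ((i + 1) mod n)} | i. i < n})"

definition new_leaves :: "'a set \<Rightarrow> 'a set set \<Rightarrow> ('a + 'a \<times> nat) set" where
  "new_leaves V E = {Inr (v, i) | v i. v \<in> V \<and> i < degree E v}"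

definition perfect_matching :: "'b set \<Rightarrow> 'b set set \<Rightarrow> bool" where
  "perfect_matching L M \<longleftrightarrow> (\<forall>e\<in>M. e \<subseteq> L \<and> card e = 2) \<and> (\<forall>x\<in>L. \<exists>!e. e \<in> M \<and> x \<in> e)"

definition dagger_vertices :: "'a set \<Rightarrow> 'a set set \<Rightarrow> ('a + 'a \<times> nat) set" where
  "dagger_vertices V E = Inl ` V \<union> new_leaves V E"

definition dagger_edges ::
  "'a set \<Rightarrow> 'a set set \<Rightarrow> ('a + 'a \<times> nat) set set \<Rightarrow> ('a + 'a \<times> nat) set set" where
  "dagger_edges V E M =
     (\<lambda>e. Inl ` e) ` E \<union> {{Inl v, Inr (v, i)} | v i. v \<in> V \<and> i < degree E v} \<union> M"

text \<open>Assortativity coefficient; for an edge e = {u,v}: d_u d_v = prod over e,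
  d_u + d_v = sum over e, d_u^2 + d_v^2 = sum of squares over e.\<close>
definition assort_num :: "'b set set \<Rightarrow> real" where
  "assort_num E = (let m = real (card E);
      A = (\<Sum>e\<in>E. \<Prod>x\<in>e. real (degree E x)) / m;
      B = (\<Sum>e\<in>E. (1/2) * (\<Sum>x\<in>e. real (degree E x))) / m
    in A - B^2)"

definition assort_den :: "'b set set \<Rightarrow> real" where
  "assort_den E = (let m = real (card E);
      C = (\<Sum>e\<in>E. (1/2) * (\<Sum>x\<in>e. (real (degree E x))^2)) / m;
      B = (\<Sum>e\<in>E. (1/2) * (\<Sum>x\<in>e. real (degree E x))) / m
    in C - B^2)"

definition assortativity :: "'b set set \<Rightarrow> real" where
  "assortativity E = assort_num E / assort_den E"

definition neutral :: "'b set set \<Rightarrow> bool" where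
  "neutral E \<longleftrightarrow> card E \<ge> 1 \<and> assort_den E \<noteq> 0 \<and> assortativity E = 0"

end

theory Submission
  imports Defs
begin

(*
  Write k = 2 for the degree of every vertex of the cycle. In G-dagger an old vertex v has
  degree 2 d_v = 2k and every new leaf has degree 2, and the edges split into |E| old edges
  (degrees 2k, 2k), 2|E| pendant edges (2k, 2) and |E| matching edges (2, 2). Averaging over
  the 4|E| edges, the mean of d_u d_v is (k + 1)^2, exactly the square of the mean end degree
  k + 1, so the numerator of r vanishes, while the denominator is 2(k^2 + 1) - (k + 1)^2 =
  (k - 1)^2 > 0. This works for every k-regular graph with k >= 2 and at least one edge.
*)

lemma simple_graph_finite_edges:
  assumes "simple_graph V E"
  shows "finite E"
  using assms unfolding simple_graph_def
  by (meson Pow_iff finite_Pow_iff rev_finite_subset subsetI)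

lemma sum_degree_eq_twice_card_edges:
  assumes "simple_graph V E"
  shows "(\<Sum>v\<in>V. degree E v) = 2 * card E"
proof -
  have "\<forall>e\<in>E. card {v \<in> V. v \<in> e} = 2"
    using assms by (auto simp: simple_graph_def Int_def[symmetric] Int_absorb1)
  then show ?thesis
    unfolding degree_def using assms simple_graph_finite_edges
    by (intro sum_multicount) (auto simp: simple_graph_def)
qed

lemma card_perfect_matching:
  assumes "finite L" and "perfect_matching L M"
  shows "finite M" and "card L = 2 * card M"
proof -
  have M: "\<And>e. e \<in> M \<Longrightarrow> e \<subseteq> L \<and> card e = 2" and cover: "\<And>x. x \<in> L \<Longrightarrow> \<exists>!e. e \<in> M \<and> x \<in> e"
    using assms(2) unfolding perfect_matching_def by auto
  show "finite M"
    using M assms(1) by (meson Pow_iff finite_Pow_iff rev_finite_subset subsetI)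
  have "L = \<Union>M"
    using M cover by blast
  moreover have "pairwise disjnt M"
    using M cover unfolding pairwise_def disjnt_def by blast
  ultimately have "card L = sum card M"
    using M assms(1) by (metis card_Union_disjoint rev_finite_subset)
  then show "card L = 2 * card M"
    using M by simp
qed

lemma Suc_mod_eq_iff:
  fixes i k n :: nat
  assumes "i < n" "k < n"
  shows "Suc i mod n = k \<longleftrightarrow> i = (k + n - 1) mod n"
  using assms by (cases "k = 0"; cases "Suc i = n") (auto simp: mod_if)

lemma Suc_mod_pred_mod:
  fixes k n :: nat
  assumes "k < n"
  shows "Suc ((k + n - 1) mod n) mod n = k"
  using Suc_mod_eq_iff[of "(k + n - 1) mod n" n k] assms by simp

lemma degree_cycle:
  assumes "3 \<le> n" and "is_cycle V E n" and "v \<in> V"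
  shows "degree E v = 2"
proof -
  obtain f where f: "bij_betw f {0..<n} V" and E: "E = {{f i, f (Suc i mod n)} | i. i < n}"
    using assms(2) unfolding is_cycle_def by auto
  have inj: "f i = f j \<longleftrightarrow> i = j" if "i < n" "j < n" for i j
    using f that unfolding bij_betw_def inj_on_def by auto
  obtain k where k: "k < n" "v = f k"
    using f assms(3) unfolding bij_betw_def by auto
  define p where "p = (k + n - 1) mod n"
  define q where "q = Suc k mod n"
  have pq: "p < n" "q < n" "q \<noteq> k" "q \<noteq> p"
    using assms(1) k by (auto simp: p_def q_def mod_if)
  define edge where "edge i = {f i, f (Suc i mod n)}" for i
  have "v \<in> edge i \<longleftrightarrow> i = k \<or> i = p" if "i < n" for i
    using inj[OF that k(1)] inj[of "Suc i mod n" k] Suc_mod_eq_iff[OF that k(1)] k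
    by (auto simp: edge_def p_def)
  then have "{i \<in> {..<n}. v \<in> edge i} = {k, p}"
    using k(1) pq(1) by auto
  moreover have "{e \<in> E. v \<in> e} = edge ` {i \<in> {..<n}. v \<in> edge i}"
    unfolding E edge_def by auto
  moreover have "edge k = {f k, f q}" "edge p = {f p, f k}"
    using Suc_mod_pred_mod[OF k(1)] by (simp_all add: edge_def q_def p_def)
  ultimately have "{e \<in> E. v \<in> e} = {{f k, f q}, {f p, f k}}"
    by simp
  moreover have "{f k, f q} \<noteq> {f p, f k}"
    using inj pq k by (auto simp: doubleton_eq_iff)
  ultimately show ?thesis
    unfolding degree_def by simp
qed

definition lifted_edges :: "'a set set \<Rightarrow> ('a + 'a \<times> nat) set set" where
  "lifted_edges E = (\<lambda>e. Inl ` e) ` E"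

definition pendant_edges :: "'a set \<Rightarrow> 'a set set \<Rightarrow> ('a + 'a \<times> nat) set set" where
  "pendant_edges V E = {{Inl v, Inr (v, i)} | v i. v \<in> V \<and> i < degree E v}"

lemma dagger_edges_eq: "dagger_edges V E M = lifted_edges E \<union> pendant_edges V E \<union> M"
  by (simp add: dagger_edges_def lifted_edges_def pendant_edges_def)

lemma card_lifted_edges: "card (lifted_edges E) = card E"
  unfolding lifted_edges_def by (intro card_image) (simp add: inj_on_def inj_image_eq_iff)

lemma finite_lifted_edges: "finite E \<Longrightarrow> finite (lifted_edges E)"
  by (simp add: lifted_edges_def)

lemma new_leaves_eq_image: "new_leaves V E = Inr ` (SIGMA v:V. {..<degree E v})"
  unfolding new_leaves_def by auto

lemma pendant_edges_eq_image:
  "pendant_edges V E = (\<lambda>(v, i). {Inl v, Inr (v, i)}) ` (SIGMA v:V. {..<degree E v})"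
  unfolding pendant_edges_def by auto

lemma card_leaf_index:
  assumes "simple_graph V E"
  shows "card (SIGMA v:V. {..<degree E v}) = 2 * card E"
  using assms sum_degree_eq_twice_card_edges by (simp add: simple_graph_def)

lemma
  assumes "simple_graph V E"
  shows finite_new_leaves: "finite (new_leaves V E)"
    and card_new_leaves: "card (new_leaves V E) = 2 * card E"
  using assms card_leaf_index[OF assms] unfolding new_leaves_eq_image
  by (auto simp: simple_graph_def card_image)

lemma
  assumes "simple_graph V E"
  shows finite_pendant_edges: "finite (pendant_edges V E)"
    and card_pendant_edges: "card (pendant_edges V E) = 2 * card E"
proof -
  have "inj_on (\<lambda>(v, i). {Inl v, Inr (v, i)}) (SIGMA v:V. {..<degree E v})"
    by (auto simp: inj_on_def doubleton_eq_iff)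
  then show "finite (pendant_edges V E)" "card (pendant_edges V E) = 2 * card E"
    using assms card_leaf_index[OF assms] unfolding pendant_edges_eq_image
    by (auto simp: simple_graph_def card_image)
qed

lemma
  assumes "simple_graph V E" and "perfect_matching (new_leaves V E) M"
  shows finite_leaf_matching: "finite M"
    and card_leaf_matching: "card M = card E"
  using card_perfect_matching[OF finite_new_leaves[OF assms(1)] assms(2)] card_new_leaves[OF assms(1)]
  by auto

lemma leaf_matching_edge_Inr:
  assumes "perfect_matching (new_leaves V E) M" and "e \<in> M" and "x \<in> e"
  shows "x \<in> new_leaves V E" and "x \<notin> range Inl"
  using assms unfolding perfect_matching_def new_leaves_def by auto

lemma
  assumes "simple_graph V E" and "perfect_matching (new_leaves V E) M"
  shows dagger_edges_disjoint_lifted_pendant: "lifted_edges E \<inter> pendant_edges V E = {}"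
    and dagger_edges_disjoint_matching: "(lifted_edges E \<union> pendant_edges V E) \<inter> M = {}"
proof -
  show "lifted_edges E \<inter> pendant_edges V E = {}"
    unfolding lifted_edges_def pendant_edges_def by auto
  have "e \<noteq> {}" if "e \<in> M" for e
    using that assms(2) unfolding perfect_matching_def by (metis card.empty zero_neq_numeral)
  moreover have "e \<inter> range Inl \<noteq> {}" if "e \<in> lifted_edges E" for e
  proof -
    have "e' \<noteq> {}" if "e' \<in> E" for e'
      using assms(1) that unfolding simple_graph_def by (metis card.empty zero_neq_numeral)
    then show ?thesis
      using that by (auto simp: lifted_edges_def)
  qed
  moreover have "e \<inter> range Inl \<noteq> {}" if "e \<in> pendant_edges V E" for e
    using that unfolding pendant_edges_def by blast
  ultimately show "(lifted_edges E \<union> pendant_edges V E) \<inter> M = {}"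
    using leaf_matching_edge_Inr(2)[OF assms(2)] by blast
qed

lemma sum_dagger_edges:
  assumes "simple_graph V E" and "perfect_matching (new_leaves V E) M"
  shows "sum F (dagger_edges V E M) = sum F (lifted_edges E) + sum F (pendant_edges V E) + sum F M"
  using dagger_edges_disjoint_lifted_pendant[OF assms] dagger_edges_disjoint_matching[OF assms]
    finite_lifted_edges[OF simple_graph_finite_edges[OF assms(1)]]
    finite_pendant_edges[OF assms(1)] finite_leaf_matching[OF assms]
  unfolding dagger_edges_eq by (metis finite_UnI sum.union_disjoint)

lemma card_dagger_edges:
  assumes "simple_graph V E" and "perfect_matching (new_leaves V E) M"
  shows "card (dagger_edges V E M) = 4 * card E"
  using sum_dagger_edges[OF assms, of "\<lambda>_. 1 :: nat"]
  by (simp add: card_lifted_edges card_pendant_edges[OF assms(1)] card_leaf_matching[OF assms])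

lemma degree_dagger_Inl:
  assumes "simple_graph V E" and "perfect_matching (new_leaves V E) M" and "v \<in> V"
  shows "degree (dagger_edges V E M) (Inl v) = 2 * degree E v"
proof -
  let ?lifted = "lifted_edges {e \<in> E. v \<in> e}"
  let ?pendant = "(\<lambda>i. {Inl v, Inr (v, i)}) ` {..<degree E v}"
  have "{e \<in> dagger_edges V E M. Inl v \<in> e} = ?lifted \<union> ?pendant"
  proof -
    have "Inl v \<notin> e" if "e \<in> M" for e
      using leaf_matching_edge_Inr(2)[OF assms(2) that, of "Inl v"] by blast
    then show ?thesis
      using assms(3) by (auto simp: dagger_edges_eq lifted_edges_def pendant_edges_def)
  qed
  moreover have "card ?lifted = degree E v"
    by (simp add: card_lifted_edges degree_def)
  moreover have "card ?pendant = degree E v"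
    by (simp add: card_image inj_on_def doubleton_eq_iff)
  moreover have "finite ?lifted"
    using simple_graph_finite_edges[OF assms(1)] by (simp add: finite_lifted_edges)
  moreover have "?lifted \<inter> ?pendant = {}"
    by (auto simp: lifted_edges_def)
  ultimately show ?thesis
    unfolding degree_def by (simp add: card_Un_disjoint)
qed

lemma degree_dagger_leaf:
  assumes "perfect_matching (new_leaves V E) M" and "x \<in> new_leaves V E"
  shows "degree (dagger_edges V E M) x = 2"
proof -
  obtain v i where x: "x = Inr (v, i)" "v \<in> V" "i < degree E v"
    using assms(2) unfolding new_leaves_def by auto
  have "\<exists>!e. e \<in> M \<and> x \<in> e"
    using assms unfolding perfect_matching_def by blast
  then obtain e where e: "e \<in> M" "x \<in> e" and unique: "\<And>e'. e' \<in> M \<Longrightarrow> x \<in> e' \<Longrightarrow> e' = e"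
    by blast
  have "{e' \<in> lifted_edges E. x \<in> e'} = {}"
    using x(1) by (auto simp: lifted_edges_def)
  moreover have "{e' \<in> pendant_edges V E. x \<in> e'} = {{Inl v, x}}"
    using x by (auto simp: pendant_edges_def)
  moreover have "{e' \<in> M. x \<in> e'} = {e}"
    using e unique by blast
  ultimately have "{e' \<in> dagger_edges V E M. x \<in> e'} = {{Inl v, x}, e}"
    unfolding dagger_edges_eq by blast
  moreover have "{Inl v, x} \<noteq> e"
    using leaf_matching_edge_Inr(2)[OF assms(1) e(1), of "Inl v"] by blast
  ultimately show ?thesis
    unfolding degree_def by simp
qed

lemma simple_graph_dagger:
  assumes "simple_graph V E" and "perfect_matching (new_leaves V E) M"
  shows "simple_graph (dagger_vertices V E) (dagger_edges V E M)"
proof -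
  have "e \<subseteq> dagger_vertices V E \<and> card e = 2" if "e \<in> lifted_edges E" for e
    using that assms(1)
    by (auto simp: lifted_edges_def simple_graph_def dagger_vertices_def card_image)
  moreover have "e \<subseteq> dagger_vertices V E \<and> card e = 2" if "e \<in> pendant_edges V E" for e
    using that by (auto simp: pendant_edges_def dagger_vertices_def new_leaves_def)
  moreover have "e \<subseteq> dagger_vertices V E \<and> card e = 2" if "e \<in> M" for e
    using that assms(2) by (auto simp: perfect_matching_def dagger_vertices_def)
  moreover have "finite (dagger_vertices V E)"
    using assms(1) finite_new_leaves[OF assms(1)] by (simp add: dagger_vertices_def simple_graph_def)
  ultimately show ?thesis
    unfolding simple_graph_def dagger_edges_eq by blast
qed

lemma sum_dagger_edges_regular:
  fixes F :: "('a + 'a \<times> nat) set \<Rightarrow> real" and \<phi> :: "nat \<Rightarrow> nat \<Rightarrow> real"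
  assumes graph: "simple_graph V E" and matching: "perfect_matching (new_leaves V E) M"
    and regular: "\<And>v. v \<in> V \<Longrightarrow> degree E v = k"
    and F: "\<And>a b. a \<noteq> b \<Longrightarrow>
      F {a, b} = \<phi> (degree (dagger_edges V E M) a) (degree (dagger_edges V E M) b)"
  shows "sum F (dagger_edges V E M) = card E * (\<phi> (2 * k) (2 * k) + 2 * \<phi> (2 * k) 2 + \<phi> 2 2)"
proof -
  have deg_Inl: "degree (dagger_edges V E M) (Inl v) = 2 * k" if "v \<in> V" for v
    using degree_dagger_Inl[OF graph matching that] regular[OF that] by simp
  note deg_leaf = degree_dagger_leaf[OF matching]
  have "F e = \<phi> (2 * k) (2 * k)" if e: "e \<in> lifted_edges E" for e
  proof -
    obtain a b where "{a, b} \<in> E" "a \<noteq> b" "e = {Inl a, Inl b}"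
      using e graph unfolding lifted_edges_def simple_graph_def by (auto simp: card_2_iff)
    moreover have "a \<in> V" "b \<in> V"
      using calculation(1) graph unfolding simple_graph_def by auto
    ultimately show ?thesis
      using F deg_Inl by simp
  qed
  then have "sum F (lifted_edges E) = card E * \<phi> (2 * k) (2 * k)"
    by (simp add: card_lifted_edges)
  moreover have "F e = \<phi> (2 * k) 2" if e: "e \<in> pendant_edges V E" for e
  proof -
    obtain v i where "v \<in> V" "i < degree E v" "e = {Inl v, Inr (v, i)}"
      using e unfolding pendant_edges_def by auto
    moreover have "Inr (v, i) \<in> new_leaves V E"
      using calculation(1,2) unfolding new_leaves_def by auto
    ultimately show ?thesis
      using F deg_Inl deg_leaf by simp
  qed
  then have "sum F (pendant_edges V E) = 2 * card E * \<phi> (2 * k) 2"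
    by (simp add: card_pendant_edges[OF graph])
  moreover have "F e = \<phi> 2 2" if e: "e \<in> M" for e
  proof -
    obtain x y where "x \<noteq> y" "e = {x, y}"
      using e matching unfolding perfect_matching_def by (meson card_2_iff)
    moreover have "x \<in> new_leaves V E" "y \<in> new_leaves V E"
      using leaf_matching_edge_Inr(1)[OF matching e] calculation(2) by auto
    ultimately show ?thesis
      using F deg_leaf by simp
  qed
  then have "sum F M = card E * \<phi> 2 2"
    by (simp add: card_leaf_matching[OF graph matching])
  ultimately show ?thesis
    by (simp add: sum_dagger_edges[OF graph matching] algebra_simps)
qed

theorem neutral_dagger_of_regular:
  assumes graph: "simple_graph V E" and matching: "perfect_matching (new_leaves V E) M"
    and regular: "\<And>v. v \<in> V \<Longrightarrow> degree E v = k" and "2 \<le> k" and "E \<noteq> {}"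
  shows "neutral (dagger_edges V E M)"
proof -
  let ?D = "dagger_edges V E M"
  let ?d = "\<lambda>x. real (degree ?D x)"
  define c where "c = real (card E)"
  have "c > 0"
    using \<open>E \<noteq> {}\<close> simple_graph_finite_edges[OF graph] by (simp add: c_def card_gt_0_iff)
  have m: "real (card ?D) = 4 * c"
    using card_dagger_edges[OF graph matching] by (simp add: c_def)
  have "(\<Sum>e\<in>?D. \<Prod>x\<in>e. ?d x) = c * (4 * (real k + 1)\<^sup>2)"
    using sum_dagger_edges_regular[OF graph matching regular, where \<phi> = "\<lambda>a b. real a * real b"]
    by (simp add: c_def power2_eq_square algebra_simps)
  moreover have "(\<Sum>e\<in>?D. (1/2) * (\<Sum>x\<in>e. ?d x)) = c * (4 * (real k + 1))"
    using sum_dagger_edges_regular[OF graph matching regular, where \<phi> = "\<lambda>a b. (real a + real b) / 2"]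
    by (simp add: c_def algebra_simps)
  moreover have "(\<Sum>e\<in>?D. (1/2) * (\<Sum>x\<in>e. (?d x)\<^sup>2)) = c * (8 * ((real k)\<^sup>2 + 1))"
    using sum_dagger_edges_regular[OF graph matching regular,
        where \<phi> = "\<lambda>a b. ((real a)\<^sup>2 + (real b)\<^sup>2) / 2"]
    by (simp add: c_def power2_eq_square algebra_simps)
  ultimately have "assort_num ?D = 0" and "assort_den ?D = (real k - 1)\<^sup>2"
    using \<open>c > 0\<close> unfolding assort_num_def assort_den_def Let_def m
    by (simp_all add: field_simps power2_eq_square)
  then show ?thesis
    using \<open>2 \<le> k\<close> \<open>c > 0\<close> m unfolding neutral_def assortativity_def by auto
qed

theorem lemma5:
  fixes V :: "'a set" and E :: "'a set set" and n :: nat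
    and M :: "('a + 'a \<times> nat) set set"
  assumes "n \<ge> 3"
    and "is_cycle V E n"
    and "perfect_matching (new_leaves V E) M"
  shows "simple_graph (dagger_vertices V E) (dagger_edges V E M)
         \<and> neutral (dagger_edges V E M)"
proof -
  have graph: "simple_graph V E"
    using assms(2) by (simp add: is_cycle_def)
  have "E \<noteq> {}"
    using assms(1,2) unfolding is_cycle_def by fastforce
  then show ?thesis
    using simple_graph_dagger[OF graph assms(3)] degree_cycle[OF assms(1,2)]
      neutral_dagger_of_regular[OF graph assms(3), of 2]
    by simp
qed

end
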